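(* The sets $\{123,2413,3142\}$ and $\{132,2314,3124\}$ are forest-Wilf equivalent.
   Context: A rooted labeled forest on $[n]$ is an unordered forest on $n$ vertices, each component with a distinguished root, with distinct labels from $[n]$. For a pattern (permutation) $\pi$ of $[k]$, an instance is a sequence of vertices $v_1,\dots,v_k$ with $v_i$ a strict ancestor of $v_{i+1}$ whose labels are in the same relative order as $\pi$; a forest avoids a set of patterns if it contains no instance of any of them. Two sets are forest-Wilf equivalent if for every $n\ge 0$ the numbers of rooted labeled forests on $[n]$ avoiding each set are equal. *)

theory Defs
  imports Main
begin

text \<open>A rooted labeled forest on [n] = {1..n} is encoded by its parent map
  par :: nat \<Rightarrow> nat, where par v = 0 means that v is a root.
  This is a bijective encoding of rooted labeled forests on [n].\<close>

definition rooted_forest :: "nat \<Rightarrow> (nat \<Rightarrow> nat) \<Rightarrow> bool" where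
  "rooted_forest n par \<longleftrightarrow>
     (\<forall>v. v \<notin> {1..n} \<longrightarrow> par v = 0) \<and>
     (\<forall>v\<in>{1..n}. par v \<in> {0..n}) \<and>
     (\<forall>v\<in>{1..n}. \<exists>k. (par ^^ k) v = 0)"

definition strict_ancestor :: "(nat \<Rightarrow> nat) \<Rightarrow> nat \<Rightarrow> nat \<Rightarrow> bool" where
  "strict_ancestor par u v \<longleftrightarrow> u \<noteq> 0 \<and> (\<exists>k>0. (par ^^ k) v = u)"

text \<open>A pattern is a permutation of [k], given as the list of its values.\<close>
definition contains_pattern :: "(nat \<Rightarrow> nat) \<Rightarrow> nat list \<Rightarrow> bool" where
  "contains_pattern par \<pi> \<longleftrightarrow>
     (\<exists>vs. length vs = length \<pi> \<and>
        (\<forall>i. Suc i < length vs \<longrightarrow> strict_ancestor par (vs ! i) (vs ! Suc i)) \<and>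
        (\<forall>i<length vs. \<forall>j<length vs. vs ! i < vs ! j \<longleftrightarrow> \<pi> ! i < \<pi> ! j))"

definition avoids :: "(nat \<Rightarrow> nat) \<Rightarrow> nat list set \<Rightarrow> bool" where
  "avoids par S \<longleftrightarrow> (\<forall>\<pi>\<in>S. \<not> contains_pattern par \<pi>)"

definition num_avoiding :: "nat list set \<Rightarrow> nat \<Rightarrow> nat" where
  "num_avoiding S n = card {par. rooted_forest n par \<and> avoids par S}"

definition forest_wilf_equiv :: "nat list set \<Rightarrow> nat list set \<Rightarrow> bool" where
  "forest_wilf_equiv S T \<longleftrightarrow> (\<forall>n. num_avoiding S n = num_avoiding T n)"

end

theory Submission
  imports Defs
begin

text \<open>
  Call a vertex high if it has a strict ancestor with a smaller label. The high vertices
  split into blocks, the connected components of the subforest they span; each block hangs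
  below a vertex that is not high and whose label is smaller than all labels of the block.
  Reversing the order of the labels inside every block, and keeping all other labels, gives a
  relabelled forest. Inside a block labels decrease downwards if 123 is avoided and increase
  downwards if 132 is avoided. If the forest avoids 123, 2413, 3142, or if it avoids 132, 2314,
  3124, then of two blocks on a common root path all labels of the lower one are smaller than
  all labels of the upper one, and the label of a vertex that is not high is either larger or
  smaller than all labels of any block below it. Hence the reversal preserves every comparison
  between a vertex and a descendant outside its block. So the relabelled forest has the same
  high vertices and blocks, the relabelling is an involution, and checking the possible
  positions of an occurrence shows that it exchanges the two avoidance classes.
\<close>

section \<open>Reversing the order of a finite set\<close>

(* The i-th smallest element of K is sent to the i-th largest one. *)
definition mirror :: "'a::linorder set \<Rightarrow> 'a \<Rightarrow> 'a" where
  "mirror K v = (let xs = sorted_list_of_set K in rev xs ! the_inv_into {..<length xs} ((!) xs) v)"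

lemma mirror_nth:
  assumes "finite K" "i < card K"
  shows "mirror K (sorted_list_of_set K ! i) = sorted_list_of_set K ! (card K - Suc i)"
proof -
  let ?xs = "sorted_list_of_set K"
  have "the_inv_into {..<length ?xs} ((!) ?xs) (?xs ! i) = i"
    using assms by (simp add: inj_on_nth the_inv_into_f_f)
  then show ?thesis
    using assms by (simp add: mirror_def rev_nth)
qed

lemma sorted_list_of_set_index:
  assumes "finite K" "v \<in> K"
  obtains i where "i < card K" "v = sorted_list_of_set K ! i"
  using assms by (metis in_set_conv_nth length_sorted_list_of_set set_sorted_list_of_set)

lemma mirror_in:
  assumes "finite K" "v \<in> K"
  shows "mirror K v \<in> K"
proof -
  obtain i where i: "i < card K" "v = sorted_list_of_set K ! i"
    using assms by (rule sorted_list_of_set_index)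
  then have "card K - Suc i < length (sorted_list_of_set K)"
    by simp
  then show ?thesis
    using assms i by (metis mirror_nth nth_mem set_sorted_list_of_set)
qed

lemma mirror_mirror:
  assumes "finite K" "v \<in> K"
  shows "mirror K (mirror K v) = v"
proof -
  obtain i where i: "i < card K" "v = sorted_list_of_set K ! i"
    using assms by (rule sorted_list_of_set_index)
  then have "card K - Suc i < card K" and "card K - Suc (card K - Suc i) = i"
    by auto
  then show ?thesis
    using assms i by (simp add: mirror_nth)
qed

lemma mirror_strict_antimono:
  assumes "finite K" "v \<in> K" "w \<in> K" "v < w"
  shows "mirror K w < mirror K v"
proof -
  let ?xs = "sorted_list_of_set K"
  obtain i where i: "i < card K" "v = ?xs ! i"
    using assms by (metis sorted_list_of_set_index)
  obtain j where j: "j < card K" "w = ?xs ! j"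
    using assms by (metis sorted_list_of_set_index)
  have "i < j"
    using assms(4) i j sorted_nth_mono[OF sorted_sorted_list_of_set, of j i K]
    by (metis leI length_sorted_list_of_set not_less)
  then have "card K - Suc j < card K - Suc i" "card K - Suc i < length ?xs"
    using j by auto
  then have "?xs ! (card K - Suc j) < ?xs ! (card K - Suc i)"
    by (rule sorted_wrt_nth_less[OF strict_sorted_list_of_set])
  then show ?thesis
    using assms i j by (simp add: mirror_nth)
qed

definition relabel :: "(nat \<Rightarrow> nat) \<Rightarrow> (nat \<Rightarrow> nat) \<Rightarrow> nat \<Rightarrow> nat" where
  "relabel \<sigma> par = \<sigma> \<circ> par \<circ> \<sigma>"

lemma funpow_relabel:
  assumes "\<And>x. \<sigma> (\<sigma> x) = x"
  shows "(relabel \<sigma> par ^^ k) x = \<sigma> ((par ^^ k) (\<sigma> x))"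
  by (induction k) (simp_all add: relabel_def assms)

lemma strict_ancestor_relabel:
  assumes "\<And>x. \<sigma> (\<sigma> x) = x" "\<sigma> 0 = 0"
  shows "strict_ancestor (relabel \<sigma> par) a b \<longleftrightarrow> strict_ancestor par (\<sigma> a) (\<sigma> b)"
proof -
  have "a \<noteq> 0 \<longleftrightarrow> \<sigma> a \<noteq> 0"
    using assms by (metis (no_types))
  moreover have "\<sigma> ((par ^^ k) (\<sigma> b)) = a \<longleftrightarrow> (par ^^ k) (\<sigma> b) = \<sigma> a" for k
    using assms(1) by (metis (no_types))
  ultimately show ?thesis
    unfolding strict_ancestor_def funpow_relabel[OF assms(1)] by simp
qed

lemma rooted_forest_relabel:
  assumes "rooted_forest n par" "\<And>x. \<sigma> (\<sigma> x) = x" "\<sigma> 0 = 0"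
    and "\<And>v. \<sigma> v \<in> {1..n} \<longleftrightarrow> v \<in> {1..n}"
  shows "rooted_forest n (relabel \<sigma> par)"
  unfolding rooted_forest_def
proof (intro conjI ballI allI impI)
  fix v
  assume "v \<notin> {1..n}"
  then have "par (\<sigma> v) = 0"
    using assms(1,4) unfolding rooted_forest_def by blast
  then show "relabel \<sigma> par v = 0"
    using assms(3) by (simp add: relabel_def)
next
  fix v
  assume "v \<in> {1..n}"
  then have "par (\<sigma> v) \<in> {0..n}"
    using assms(1,4) unfolding rooted_forest_def by blast
  show "relabel \<sigma> par v \<in> {0..n}"
  proof (cases "par (\<sigma> v) = 0")
    case True
    then show ?thesis
      using assms(3) by (simp add: relabel_def)
  next
    case False
    then have "\<sigma> (par (\<sigma> v)) \<in> {1..n}"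
      using \<open>par (\<sigma> v) \<in> {0..n}\<close> assms(4) by auto
    then show ?thesis
      by (simp add: relabel_def)
  qed
next
  fix v
  assume "v \<in> {1..n}"
  then obtain k where "(par ^^ k) (\<sigma> v) = 0"
    using assms unfolding rooted_forest_def by blast
  then have "(relabel \<sigma> par ^^ k) v = 0"
    by (simp add: funpow_relabel assms(2,3))
  then show "\<exists>k. (relabel \<sigma> par ^^ k) v = 0" ..
qed

lemma relabel_relabel:
  assumes "\<And>x. \<sigma> (\<sigma> x) = x"
  shows "relabel \<sigma> (relabel \<sigma> par) = par"
  by (simp add: relabel_def assms fun_eq_iff)

lemma all_less_3: "(\<forall>i<3. P i) \<longleftrightarrow> P (0::nat) \<and> P 1 \<and> P 2"
  by (auto simp: less_Suc_eq eval_nat_numeral)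

lemma all_less_4: "(\<forall>i<4. P i) \<longleftrightarrow> P (0::nat) \<and> P 1 \<and> P 2 \<and> P 3"
  by (auto simp: less_Suc_eq eval_nat_numeral)

lemma contains_pattern_length_3:
  assumes "length \<pi> = 3"
  shows "contains_pattern P \<pi> \<longleftrightarrow> (\<exists>a b c. strict_ancestor P a b \<and> strict_ancestor P b c \<and>
    (\<forall>i<3. \<forall>j<3. [a,b,c] ! i < [a,b,c] ! j \<longleftrightarrow> \<pi> ! i < \<pi> ! j))"
proof
  assume "contains_pattern P \<pi>"
  then obtain vs where vs: "length vs = 3"
    "\<forall>i. Suc i < length vs \<longrightarrow> strict_ancestor P (vs ! i) (vs ! Suc i)"
    "\<forall>i<length vs. \<forall>j<length vs. vs ! i < vs ! j \<longleftrightarrow> \<pi> ! i < \<pi> ! j"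
    using assms unfolding contains_pattern_def by auto
  moreover have "vs = [vs!0, vs!1, vs!2]"
    using vs(1) by (simp add: list_eq_iff_nth_eq all_less_3)
  ultimately show "\<exists>a b c. strict_ancestor P a b \<and> strict_ancestor P b c \<and>
    (\<forall>i<3. \<forall>j<3. [a,b,c] ! i < [a,b,c] ! j \<longleftrightarrow> \<pi> ! i < \<pi> ! j)"
    by (intro exI[of _ "vs!0"] exI[of _ "vs!1"] exI[of _ "vs!2"]) (auto simp: numeral_eq_Suc)
next
  assume "\<exists>a b c. strict_ancestor P a b \<and> strict_ancestor P b c \<and>
    (\<forall>i<3. \<forall>j<3. [a,b,c] ! i < [a,b,c] ! j \<longleftrightarrow> \<pi> ! i < \<pi> ! j)"
  then obtain a b c where chain: "strict_ancestor P a b" "strict_ancestor P b c"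
    and order: "\<forall>i<3. \<forall>j<3. [a,b,c] ! i < [a,b,c] ! j \<longleftrightarrow> \<pi> ! i < \<pi> ! j"
    by blast
  then show "contains_pattern P \<pi>"
    unfolding contains_pattern_def using assms chain order
    by (intro exI[of _ "[a,b,c]"] conjI) (auto simp: less_Suc_eq numeral_eq_Suc)
qed

lemma contains_123_iff: "contains_pattern P [1,2,3] \<longleftrightarrow>
    (\<exists>a b c. strict_ancestor P a b \<and> strict_ancestor P b c \<and> a < b \<and> b < c)"
  by (force simp: contains_pattern_length_3 all_less_3)

lemma contains_132_iff: "contains_pattern P [1,3,2] \<longleftrightarrow>
    (\<exists>a b c. strict_ancestor P a b \<and> strict_ancestor P b c \<and> a < c \<and> c < b)"
  by (force simp: contains_pattern_length_3 all_less_3)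

lemma contains_pattern_length_4:
  assumes "length \<pi> = 4"
  shows "contains_pattern P \<pi> \<longleftrightarrow> (\<exists>a b c d. strict_ancestor P a b \<and> strict_ancestor P b c \<and>
    strict_ancestor P c d \<and>
    (\<forall>i<4. \<forall>j<4. [a,b,c,d] ! i < [a,b,c,d] ! j \<longleftrightarrow> \<pi> ! i < \<pi> ! j))"
proof
  assume "contains_pattern P \<pi>"
  then obtain vs where vs: "length vs = 4"
    "\<forall>i. Suc i < length vs \<longrightarrow> strict_ancestor P (vs ! i) (vs ! Suc i)"
    "\<forall>i<length vs. \<forall>j<length vs. vs ! i < vs ! j \<longleftrightarrow> \<pi> ! i < \<pi> ! j"
    using assms unfolding contains_pattern_def by auto
  moreover have "vs = [vs!0, vs!1, vs!2, vs!3]"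
    using vs(1) by (simp add: list_eq_iff_nth_eq all_less_4)
  ultimately show "\<exists>a b c d. strict_ancestor P a b \<and> strict_ancestor P b c \<and>
    strict_ancestor P c d \<and>
    (\<forall>i<4. \<forall>j<4. [a,b,c,d] ! i < [a,b,c,d] ! j \<longleftrightarrow> \<pi> ! i < \<pi> ! j)"
    by (intro exI[of _ "vs!0"] exI[of _ "vs!1"] exI[of _ "vs!2"] exI[of _ "vs!3"])
      (auto simp: numeral_eq_Suc)
next
  assume "\<exists>a b c d. strict_ancestor P a b \<and> strict_ancestor P b c \<and> strict_ancestor P c d \<and>
    (\<forall>i<4. \<forall>j<4. [a,b,c,d] ! i < [a,b,c,d] ! j \<longleftrightarrow> \<pi> ! i < \<pi> ! j)"
  then obtain a b c d where chain: "strict_ancestor P a b" "strict_ancestor P b c"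
      "strict_ancestor P c d"
    and order: "\<forall>i<4. \<forall>j<4. [a,b,c,d] ! i < [a,b,c,d] ! j \<longleftrightarrow> \<pi> ! i < \<pi> ! j"
    by blast
  then show "contains_pattern P \<pi>"
    unfolding contains_pattern_def using assms chain order
    by (intro exI[of _ "[a,b,c,d]"] conjI) (auto simp: less_Suc_eq numeral_eq_Suc)
qed

lemma contains_2413_iff: "contains_pattern P [2,4,1,3] \<longleftrightarrow>
    (\<exists>a b c d. strict_ancestor P a b \<and> strict_ancestor P b c \<and> strict_ancestor P c d \<and>
      c < a \<and> a < d \<and> d < b)"
  by (force simp: contains_pattern_length_4 all_less_4)

lemma contains_3142_iff: "contains_pattern P [3,1,4,2] \<longleftrightarrow>
    (\<exists>a b c d. strict_ancestor P a b \<and> strict_ancestor P b c \<and> strict_ancestor P c d \<and>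
      b < d \<and> d < a \<and> a < c)"
  by (force simp: contains_pattern_length_4 all_less_4)

lemma contains_2314_iff: "contains_pattern P [2,3,1,4] \<longleftrightarrow>
    (\<exists>a b c d. strict_ancestor P a b \<and> strict_ancestor P b c \<and> strict_ancestor P c d \<and>
      c < a \<and> a < b \<and> b < d)"
  by (force simp: contains_pattern_length_4 all_less_4)

lemma contains_3124_iff: "contains_pattern P [3,1,2,4] \<longleftrightarrow>
    (\<exists>a b c d. strict_ancestor P a b \<and> strict_ancestor P b c \<and> strict_ancestor P c d \<and>
      b < c \<and> c < a \<and> a < d)"
  by (force simp: contains_pattern_length_4 all_less_4)

definition ancestor_or_self :: "(nat \<Rightarrow> nat) \<Rightarrow> nat \<Rightarrow> nat \<Rightarrow> bool" where
  "ancestor_or_self par a b \<longleftrightarrow> a = b \<or> strict_ancestor par a b"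

lemma strict_ancestor_trans:
  "strict_ancestor par a b \<Longrightarrow> strict_ancestor par b c \<Longrightarrow> strict_ancestor par a c"
  unfolding strict_ancestor_def by (metis add_gr_0 comp_apply funpow_add)

lemma strict_ancestor_total:
  assumes "strict_ancestor par a v" "strict_ancestor par b v"
  shows "a = b \<or> strict_ancestor par a b \<or> strict_ancestor par b a"
proof -
  obtain i where i: "i > 0" "(par ^^ i) v = a" "a \<noteq> 0"
    using assms(1) unfolding strict_ancestor_def by auto
  obtain j where j: "j > 0" "(par ^^ j) v = b" "b \<noteq> 0"
    using assms(2) unfolding strict_ancestor_def by auto
  have climb: "(par ^^ (l - k)) ((par ^^ k) v) = (par ^^ l) v" if "k \<le> l" for k l
    using that by (metis funpow_add le_add_diff_inverse2 o_apply)
  consider "i < j" | "i = j" | "j < i" by arith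
  then show ?thesis
  proof cases
    case 1
    then have "strict_ancestor par b a"
      using climb[of i j] 1 i j unfolding strict_ancestor_def by (metis less_imp_le zero_less_diff)
    then show ?thesis by simp
  next
    case 2
    then show ?thesis using i j by simp
  next
    case 3
    then have "strict_ancestor par a b"
      using climb[of j i] 3 i j unfolding strict_ancestor_def by (metis less_imp_le zero_less_diff)
    then show ?thesis by simp
  qed
qed

lemma ancestor_or_self_trans:
  "ancestor_or_self par a b \<Longrightarrow> ancestor_or_self par b c \<Longrightarrow> ancestor_or_self par a c"
  unfolding ancestor_or_self_def using strict_ancestor_trans by blast

lemma ancestor_or_self_total:
  "ancestor_or_self par a v \<Longrightarrow> ancestor_or_self par b v \<Longrightarrow>
    ancestor_or_self par a b \<or> ancestor_or_self par b a"
  unfolding ancestor_or_self_def using strict_ancestor_total by blast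

locale forest =
  fixes n :: nat and par :: "nat \<Rightarrow> nat"
  assumes rooted_forest: "rooted_forest n par"
begin

abbreviation anc :: "nat \<Rightarrow> nat \<Rightarrow> bool" where
  "anc \<equiv> strict_ancestor par"

abbreviation anc_eq :: "nat \<Rightarrow> nat \<Rightarrow> bool" where
  "anc_eq \<equiv> ancestor_or_self par"

lemma par_0: "par 0 = 0"
  using rooted_forest unfolding rooted_forest_def by auto

lemma par_le: "par v \<le> n"
  using rooted_forest unfolding rooted_forest_def by (cases "v \<in> {1..n}") auto

lemma funpow_par_0: "(par ^^ k) 0 = 0"
  by (induction k) (auto simp: par_0)

lemma reaches_root: "\<exists>k. (par ^^ k) v = 0"
proof (cases "v \<in> {1..n}")
  case True
  then show ?thesis using rooted_forest unfolding rooted_forest_def by auto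
next
  case False
  then have "(par ^^ 1) v = 0" using rooted_forest unfolding rooted_forest_def by auto
  then show ?thesis ..
qed

lemma anc_irrefl: "\<not> anc a a"
proof
  assume "anc a a"
  then obtain k where k: "(par ^^ Suc k) a = a" "a \<noteq> 0"
    unfolding strict_ancestor_def by (metis gr0_implies_Suc)
  obtain m where m: "(par ^^ m) a = 0"
    using reaches_root by blast
  have "(par ^^ (Suc k * m)) a = a"
    unfolding funpow_mult[symmetric] using k(1) by (induction m) auto
  moreover have "(par ^^ (k * m + m)) a = 0"
    using m by (simp add: funpow_add funpow_par_0)
  moreover have "Suc k * m = k * m + m"
    by simp
  ultimately show False
    using k(2) by metis
qed

lemma anc_asym: "anc a b \<Longrightarrow> \<not> anc b a"
  using strict_ancestor_trans anc_irrefl by blast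

lemma anc_parent: "anc a v \<longleftrightarrow> par v \<noteq> 0 \<and> anc_eq a (par v)"
proof
  assume "anc a v"
  then obtain k where k: "(par ^^ k) (par v) = a" "a \<noteq> 0"
    unfolding strict_ancestor_def by (metis gr0_implies_Suc funpow_Suc_right comp_apply)
  then show "par v \<noteq> 0 \<and> anc_eq a (par v)"
    unfolding ancestor_or_self_def strict_ancestor_def
    by (metis funpow_0 funpow_par_0 neq0_conv)
next
  assume "par v \<noteq> 0 \<and> anc_eq a (par v)"
  then obtain k where "(par ^^ k) (par v) = a" "a \<noteq> 0"
    unfolding ancestor_or_self_def strict_ancestor_def by (metis funpow_0)
  then show "anc a v"
    unfolding strict_ancestor_def by (metis zero_less_Suc funpow_Suc_right comp_apply)
qed

lemma anc_range: "anc a b \<Longrightarrow> a \<in> {1..n} \<and> b \<in> {1..n}"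
proof -
  assume ab: "anc a b"
  then have "b \<in> {1..n}"
    using anc_parent rooted_forest unfolding rooted_forest_def by blast
  moreover obtain k where "(par ^^ Suc k) b = a" "a \<noteq> 0"
    using ab unfolding strict_ancestor_def by (metis gr0_implies_Suc)
  then have "a \<in> {1..n}"
    using par_le[of "(par ^^ k) b"] by simp
  ultimately show ?thesis by simp
qed

lemma anc_eq_antisym: "anc_eq a b \<Longrightarrow> anc_eq b a \<Longrightarrow> a = b"
  unfolding ancestor_or_self_def using anc_asym by blast

end

section \<open>Blocks\<close>

definition has_smaller_ancestor :: "(nat \<Rightarrow> nat) \<Rightarrow> nat \<Rightarrow> bool" where
  "has_smaller_ancestor par v \<longleftrightarrow> (\<exists>a. strict_ancestor par a v \<and> a < v)"

definition block_path :: "(nat \<Rightarrow> nat) \<Rightarrow> nat \<Rightarrow> nat \<Rightarrow> bool" where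
  "block_path par t x \<longleftrightarrow> ancestor_or_self par t x \<and>
     (\<forall>z. ancestor_or_self par t z \<longrightarrow> ancestor_or_self par z x \<longrightarrow> has_smaller_ancestor par z)"

(* x and y lie in the same connected component of the subforest spanned by the vertices
   that have a smaller ancestor. *)
definition same_block :: "(nat \<Rightarrow> nat) \<Rightarrow> nat \<Rightarrow> nat \<Rightarrow> bool" where
  "same_block par x y \<longleftrightarrow> (\<exists>t. block_path par t x \<and> block_path par t y)"

definition block :: "(nat \<Rightarrow> nat) \<Rightarrow> nat \<Rightarrow> nat set" where
  "block par v = {w. same_block par v w}"

(* u is the parent of the topmost vertex of the block of v. *)
definition block_base :: "(nat \<Rightarrow> nat) \<Rightarrow> nat \<Rightarrow> nat \<Rightarrow> bool" where
  "block_base par u v \<longleftrightarrow> \<not> has_smaller_ancestor par u \<and> strict_ancestor par u v \<and>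
     (\<forall>z. strict_ancestor par u z \<longrightarrow> ancestor_or_self par z v \<longrightarrow> has_smaller_ancestor par z)"

context forest
begin

lemma has_smaller_ancestor_range: "has_smaller_ancestor par v \<Longrightarrow> v \<in> {1..n}"
  unfolding has_smaller_ancestor_def using anc_range by blast

lemma not_has_smaller_ancestor_less:
  "\<not> has_smaller_ancestor par v \<Longrightarrow> anc a v \<Longrightarrow> v < a"
  unfolding has_smaller_ancestor_def using anc_irrefl by (metis linorder_neqE_nat)

lemma block_path_has_smaller_ancestor:
  "block_path par t x \<Longrightarrow> has_smaller_ancestor par t \<and> has_smaller_ancestor par x"
  unfolding block_path_def ancestor_or_self_def by blast

lemma block_path_refl: "has_smaller_ancestor par v \<Longrightarrow> block_path par v v"
  unfolding block_path_def using anc_eq_antisym by (auto simp: ancestor_or_self_def)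

lemma block_path_prefix:
  "block_path par t x \<Longrightarrow> anc_eq t s \<Longrightarrow> anc_eq s x \<Longrightarrow> block_path par t s"
  unfolding block_path_def using ancestor_or_self_trans by blast

lemma block_path_suffix:
  "block_path par t x \<Longrightarrow> anc_eq t s \<Longrightarrow> anc_eq s x \<Longrightarrow> block_path par s x"
  unfolding block_path_def using ancestor_or_self_trans by blast

lemma block_path_append:
  assumes ts: "block_path par t s" and sx: "block_path par s x"
  shows "block_path par t x"
  unfolding block_path_def
proof (intro conjI allI impI)
  have "anc_eq t s" "anc_eq s x"
    using ts sx unfolding block_path_def by blast+
  then show "anc_eq t x"
    by (rule ancestor_or_self_trans)
  fix z
  assume "anc_eq t z" "anc_eq z x"
  then consider "anc_eq z s" | "anc_eq s z"
    using ancestor_or_self_total \<open>anc_eq s x\<close> by blast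
  then show "has_smaller_ancestor par z"
    using ts sx \<open>anc_eq t z\<close> \<open>anc_eq z x\<close> unfolding block_path_def by cases blast+
qed

lemma same_block_has_smaller_ancestor:
  "same_block par x y \<Longrightarrow> has_smaller_ancestor par x \<and> has_smaller_ancestor par y"
  unfolding same_block_def using block_path_has_smaller_ancestor by blast

lemma same_block_refl: "has_smaller_ancestor par v \<Longrightarrow> same_block par v v"
  unfolding same_block_def using block_path_refl by blast

lemma same_block_sym: "same_block par x y \<Longrightarrow> same_block par y x"
  unfolding same_block_def by blast

lemma same_block_trans:
  assumes "same_block par x y" "same_block par y z"
  shows "same_block par x z"
proof -
  obtain s where s: "block_path par s x" "block_path par s y"
    using assms(1) unfolding same_block_def by blast
  obtain t where t: "block_path par t y" "block_path par t z"
    using assms(2) unfolding same_block_def by blast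
  have "anc_eq s y" "anc_eq t y"
    using s t unfolding block_path_def by blast+
  then consider "anc_eq s t" | "anc_eq t s"
    using ancestor_or_self_total by blast
  then show ?thesis
  proof cases
    case 1
    have "block_path par s t"
      using s(2) 1 \<open>anc_eq t y\<close> by (rule block_path_prefix)
    then show ?thesis
      using s(1) t(2) block_path_append unfolding same_block_def by blast
  next
    case 2
    have "block_path par t s"
      using t(1) 2 \<open>anc_eq s y\<close> by (rule block_path_prefix)
    then show ?thesis
      using s(1) t(2) block_path_append unfolding same_block_def by blast
  qed
qed

lemma same_block_iff_block_path:
  assumes "anc_eq x y"
  shows "same_block par x y \<longleftrightarrow> block_path par x y"
proof
  assume "same_block par x y"
  then obtain t where "block_path par t x" "block_path par t y"
    unfolding same_block_def by blast
  then show "block_path par x y"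
    using assms block_path_suffix unfolding block_path_def by blast
next
  assume "block_path par x y"
  then show "same_block par x y"
    unfolding same_block_def
    using block_path_refl block_path_has_smaller_ancestor by blast
qed

lemma same_block_between:
  assumes "anc x y" "anc y z" "same_block par x z"
  shows "same_block par x y"
proof -
  have "anc_eq x y" "anc_eq y z" "anc_eq x z"
    using assms(1,2) strict_ancestor_trans unfolding ancestor_or_self_def by blast+
  then show ?thesis
    using assms(3) block_path_prefix same_block_iff_block_path by blast
qed

lemma low_between_blocks:
  assumes "anc x y" "has_smaller_ancestor par x" "has_smaller_ancestor par y"
    and "\<not> same_block par x y"
  obtains p where "\<not> has_smaller_ancestor par p" "anc x p" "anc p y"
proof -
  obtain p where "anc_eq x p" "anc_eq p y" "\<not> has_smaller_ancestor par p"
    using assms same_block_iff_block_path unfolding block_path_def ancestor_or_self_def by blast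
  moreover have "p \<noteq> x" "p \<noteq> y"
    using assms(2,3) \<open>\<not> has_smaller_ancestor par p\<close> by blast+
  ultimately show ?thesis
    using that unfolding ancestor_or_self_def by blast
qed

lemma block_base_exists:
  assumes "has_smaller_ancestor par v"
  shows "\<exists>u. block_base par u v"
proof -
  obtain k where "(par ^^ k) v = 0"
    using reaches_root by blast
  then show ?thesis
    using assms
  proof (induction k arbitrary: v)
    case 0
    then show ?case
      using has_smaller_ancestor_range by force
  next
    case (Suc k)
    have "par v \<noteq> 0"
      using Suc.prems(2) anc_parent unfolding has_smaller_ancestor_def by blast
    have below_parent: "anc_eq z (par v)" if "anc_eq z v" "z \<noteq> v" for z
      using that anc_parent unfolding ancestor_or_self_def by blast
    show ?case
    proof (cases "has_smaller_ancestor par (par v)")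
      case False
      have "anc (par v) v"
        using \<open>par v \<noteq> 0\<close> anc_parent unfolding ancestor_or_self_def by blast
      then have "block_base par (par v) v"
        unfolding block_base_def
        using False Suc.prems(2) below_parent anc_asym unfolding ancestor_or_self_def by blast
      then show ?thesis ..
    next
      case True
      have "(par ^^ k) (par v) = 0"
        using Suc.prems(1) by (simp add: funpow_swap1)
      then obtain u where u: "block_base par u (par v)"
        using Suc.IH True by blast
      have "anc u v"
        using u \<open>par v \<noteq> 0\<close> anc_parent unfolding block_base_def ancestor_or_self_def by blast
      moreover have "has_smaller_ancestor par z" if "anc u z" "anc_eq z v" for z
        using that u Suc.prems(2) below_parent unfolding block_base_def by (cases "z = v") blast+
      ultimately have "block_base par u v"
        using u unfolding block_base_def by blast
      then show ?thesis ..
    qed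
  qed
qed

lemma block_base_less:
  assumes "block_base par u k"
  shows "u < k"
  using assms
proof (induction k rule: less_induct)
  case (less k)
  have low: "\<not> has_smaller_ancestor par u" and uk: "anc u k"
    and path: "\<forall>z. anc u z \<longrightarrow> anc_eq z k \<longrightarrow> has_smaller_ancestor par z"
    using less.prems unfolding block_base_def by auto
  have "has_smaller_ancestor par k"
    using path uk unfolding ancestor_or_self_def by blast
  then obtain c where c: "anc c k" "c < k"
    unfolding has_smaller_ancestor_def by blast
  from strict_ancestor_total[OF c(1) uk] consider "c = u" | "anc c u" | "anc u c"
    by blast
  then show ?case
  proof cases
    case 1
    then show ?thesis using c by simp
  next
    case 2
    then show ?thesis using not_has_smaller_ancestor_less[OF low] c by fastforce
  next
    case 3
    have "anc_eq c k"
      using c(1) unfolding ancestor_or_self_def by blast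
    then have "block_base par u c"
      unfolding block_base_def using low 3 path ancestor_or_self_trans by blast
    then have "u < c" using less.IH c by blast
    then show ?thesis using c by simp
  qed
qed

lemma block_base_above_block_path:
  assumes "block_base par u v" "block_path par t v"
  shows "anc u t"
proof -
  have uv: "anc u v" and low: "\<not> has_smaller_ancestor par u"
    using assms(1) unfolding block_base_def by auto
  have "has_smaller_ancestor par t"
    using assms(2) block_path_has_smaller_ancestor by blast
  have "anc_eq t v"
    using assms(2) unfolding block_path_def by blast
  moreover have "anc_eq u v"
    using uv unfolding ancestor_or_self_def by blast
  ultimately consider "anc_eq u t" | "anc_eq t u"
    using ancestor_or_self_total by blast
  then show ?thesis
  proof cases
    case 1
    then show ?thesis
      using low \<open>has_smaller_ancestor par t\<close> unfolding ancestor_or_self_def by blast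
  next
    case 2
    then have "has_smaller_ancestor par u"
      using assms(2) \<open>anc_eq u v\<close> unfolding block_path_def by blast
    then show ?thesis
      using low by blast
  qed
qed

lemma block_base_same_block:
  assumes base: "block_base par u v" and "same_block par v k"
  shows "block_base par u k"
proof -
  obtain t where t: "block_path par t v" "block_path par t k"
    using assms(2) unfolding same_block_def by blast
  have "anc u t"
    using base t(1) by (rule block_base_above_block_path)
  have "anc_eq t k"
    using t(2) unfolding block_path_def by blast
  then have "anc u k"
    using \<open>anc u t\<close> strict_ancestor_trans[of par u t k] by (auto simp: ancestor_or_self_def)
  moreover have "has_smaller_ancestor par z" if uz: "anc u z" and zk: "anc_eq z k" for z
  proof -
    consider "anc_eq t z" | "anc_eq z t"
      using ancestor_or_self_total[OF \<open>anc_eq t k\<close> zk] by blast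
    then show ?thesis
    proof cases
      case 1
      then show ?thesis using t(2) zk unfolding block_path_def by blast
    next
      case 2
      moreover have "anc_eq t v"
        using t(1) unfolding block_path_def by blast
      ultimately have "anc_eq z v"
        using ancestor_or_self_trans by blast
      then show ?thesis using base uz unfolding block_base_def by blast
    qed
  qed
  ultimately show ?thesis
    using base unfolding block_base_def by blast
qed

lemma block_base_less_same_block: "block_base par u v \<Longrightarrow> same_block par v k \<Longrightarrow> u < k"
  using block_base_same_block block_base_less by blast

lemma low_ancestor_above_block_base:
  assumes "block_base par u y" "\<not> has_smaller_ancestor par x" "anc x y"
  shows "anc_eq x u"
proof -
  have "anc u y" and path: "\<forall>z. anc u z \<longrightarrow> anc_eq z y \<longrightarrow> has_smaller_ancestor par z"
    using assms(1) unfolding block_base_def by auto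
  from strict_ancestor_total[OF assms(3) this(1)] consider "x = u" | "anc x u" | "anc u x"
    by blast
  then show ?thesis
  proof cases
    case 3
    moreover have "anc_eq x y"
      using assms(3) by (simp add: ancestor_or_self_def)
    ultimately show ?thesis
      using path assms(2) by blast
  qed (simp_all add: ancestor_or_self_def)
qed

lemma low_ancestor_of_block:
  assumes "\<not> has_smaller_ancestor par x" "anc x y" "same_block par y k"
  shows "anc x k"
proof -
  have "has_smaller_ancestor par y"
    using assms(3) same_block_has_smaller_ancestor by blast
  then obtain u where u: "block_base par u y"
    using block_base_exists by blast
  then have "anc_eq x u"
    using assms(1,2) low_ancestor_above_block_base by blast
  moreover have "anc u k"
    using block_base_same_block[OF u assms(3)] unfolding block_base_def by blast
  ultimately show ?thesis
    using strict_ancestor_trans unfolding ancestor_or_self_def by blast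
qed

lemma low_between_blocks_above:
  assumes "anc x y" "has_smaller_ancestor par x" "has_smaller_ancestor par y"
    and "\<not> same_block par x y" "same_block par y k"
  obtains p where "\<not> has_smaller_ancestor par p" "anc x p" "anc p k"
proof -
  obtain p where p: "\<not> has_smaller_ancestor par p" "anc x p" "anc p y"
    using low_between_blocks[OF assms(1-4)] .
  then show ?thesis
    using that low_ancestor_of_block[OF p(1,3) assms(5)] by blast
qed

lemma same_block_common_top:
  assumes "same_block par y k" "block_base par u y"
  shows "\<exists>t. anc u t \<and> anc_eq t y \<and> anc_eq t k \<and> same_block par t y \<and> same_block par t k"
proof -
  obtain t where t: "block_path par t y" "block_path par t k"
    using assms(1) unfolding same_block_def by blast
  then have "anc_eq t y" "anc_eq t k"
    unfolding block_path_def by auto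
  moreover have "anc u t"
    using assms(2) t(1) by (rule block_base_above_block_path)
  ultimately show ?thesis
    using t same_block_iff_block_path by blast
qed

lemma low_below_block_less:
  assumes "has_smaller_ancestor par b" "anc b v" "\<not> has_smaller_ancestor par v"
    and "same_block par b k"
  shows "v < k"
proof -
  obtain u where u: "block_base par u b"
    using block_base_exists assms(1) by blast
  then have "anc u v"
    using assms(2) strict_ancestor_trans unfolding block_base_def by blast
  then have "v < u"
    using assms(3) not_has_smaller_ancestor_less by blast
  moreover have "u < k"
    using block_base_less_same_block u assms(4) by blast
  ultimately show ?thesis by simp
qed

lemma finite_block: "finite (block par v)"
proof (rule finite_subset)
  show "block par v \<subseteq> {1..n}"
    unfolding block_def using same_block_has_smaller_ancestor has_smaller_ancestor_range by blast
qed simp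

lemma same_block_imp_block_eq: "same_block par v w \<Longrightarrow> block par w = block par v"
  unfolding block_def using same_block_sym same_block_trans by blast

end

section \<open>Reversing the labels inside every block\<close>

definition block_flip :: "(nat \<Rightarrow> nat) \<Rightarrow> nat \<Rightarrow> nat" where
  "block_flip par v = (if has_smaller_ancestor par v then mirror (block par v) v else v)"

definition flip_forest :: "(nat \<Rightarrow> nat) \<Rightarrow> nat \<Rightarrow> nat" where
  "flip_forest par = relabel (block_flip par) par"

context forest
begin

lemma block_flip_eq_self: "\<not> has_smaller_ancestor par v \<Longrightarrow> block_flip par v = v"
  unfolding block_flip_def by simp

lemma same_block_block_flip: "has_smaller_ancestor par v \<Longrightarrow> same_block par v (block_flip par v)"
proof -
  assume high: "has_smaller_ancestor par v"
  then have "v \<in> block par v"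
    unfolding block_def using same_block_refl by simp
  then have "mirror (block par v) v \<in> block par v"
    using mirror_in finite_block by blast
  then show ?thesis
    unfolding block_flip_def block_def using high by simp
qed

lemma block_flip_block_flip: "block_flip par (block_flip par v) = v"
proof (cases "has_smaller_ancestor par v")
  case True
  have "same_block par v (block_flip par v)"
    using same_block_block_flip True .
  then have "has_smaller_ancestor par (block_flip par v)"
    and "block par (block_flip par v) = block par v"
    using same_block_has_smaller_ancestor same_block_imp_block_eq by blast+
  moreover have "v \<in> block par v"
    unfolding block_def using same_block_refl True by simp
  ultimately show ?thesis
    using True by (simp add: block_flip_def mirror_mirror finite_block)
next
  case False
  then show ?thesis by (simp add: block_flip_eq_self)
qed

lemma block_flip_eq_iff: "block_flip par x = block_flip par y \<longleftrightarrow> x = y"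
  by (metis block_flip_block_flip)

lemma has_smaller_ancestor_block_flip:
  "has_smaller_ancestor par (block_flip par v) \<longleftrightarrow> has_smaller_ancestor par v"
  using same_block_block_flip same_block_has_smaller_ancestor block_flip_eq_self by metis

lemma same_block_block_flip_less_iff:
  assumes "same_block par x y"
  shows "block_flip par x < block_flip par y \<longleftrightarrow> y < x"
proof -
  have high: "has_smaller_ancestor par x" "has_smaller_ancestor par y"
    using same_block_has_smaller_ancestor assms by auto
  have "x \<in> block par x" "y \<in> block par x"
    unfolding block_def using same_block_refl high assms by auto
  moreover have "block_flip par x = mirror (block par x) x"
    and "block_flip par y = mirror (block par x) y"
    unfolding block_flip_def using high same_block_imp_block_eq[OF assms] by auto
  ultimately show ?thesis
    using mirror_strict_antimono[OF finite_block] by (metis linorder_neqE_nat order.asym)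
qed

lemma same_block_block_flip_right: "same_block par x k \<Longrightarrow> same_block par x (block_flip par k)"
  using same_block_block_flip same_block_trans same_block_has_smaller_ancestor by blast

lemma block_flip_0: "block_flip par 0 = 0"
  using block_flip_eq_self has_smaller_ancestor_range by force

lemma block_flip_range: "block_flip par v \<in> {1..n} \<longleftrightarrow> v \<in> {1..n}"
  using has_smaller_ancestor_block_flip has_smaller_ancestor_range block_flip_eq_self by metis

lemma strict_ancestor_flip_forest:
  "strict_ancestor (flip_forest par) a b \<longleftrightarrow> anc (block_flip par a) (block_flip par b)"
  unfolding flip_forest_def
  by (rule strict_ancestor_relabel) (simp_all add: block_flip_block_flip block_flip_0)

lemma ancestor_or_self_flip_forest:
  "ancestor_or_self (flip_forest par) a b \<longleftrightarrow> anc_eq (block_flip par a) (block_flip par b)"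
  unfolding ancestor_or_self_def strict_ancestor_flip_forest by (metis block_flip_block_flip)

lemma rooted_forest_flip_forest: "rooted_forest n (flip_forest par)"
  unfolding flip_forest_def
  using rooted_forest block_flip_block_flip block_flip_0 block_flip_range
  by (rule rooted_forest_relabel)

end

(* The two properties of both avoidance classes that make the reversal of the blocks
   preserve all comparisons leaving a block. *)
locale separated_forest = forest +
  assumes blocks_separated: "anc x y \<Longrightarrow> has_smaller_ancestor par x \<Longrightarrow>
      has_smaller_ancestor par y \<Longrightarrow> \<not> same_block par x y \<Longrightarrow>
      same_block par y k \<Longrightarrow> same_block par x k' \<Longrightarrow> k < k'"
    and low_above_block: "\<not> has_smaller_ancestor par x \<Longrightarrow> anc x y \<Longrightarrow>
      same_block par y k \<Longrightarrow> y < x \<Longrightarrow> k < x"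
begin

lemma low_separates_block:
  assumes "\<not> has_smaller_ancestor par x" "anc x y" "same_block par y k"
  shows "x < k \<longleftrightarrow> x < y"
proof -
  have "anc x k"
    using assms low_ancestor_of_block by blast
  moreover have "x \<noteq> y" "x \<noteq> k"
    using assms(1,3) same_block_has_smaller_ancestor by blast+
  ultimately show ?thesis
    using assms low_above_block same_block_sym by (metis linorder_neqE_nat order.asym)
qed

lemma block_flip_less_iff:
  assumes xy: "anc x y" and "\<not> same_block par x y"
  shows "block_flip par x < block_flip par y \<longleftrightarrow> x < y"
proof (cases "has_smaller_ancestor par x")
  case True
  then have x_block: "same_block par x x" "same_block par x (block_flip par x)"
    using same_block_refl same_block_block_flip by blast+
  show ?thesis
  proof (cases "has_smaller_ancestor par y")
    case True
    then have "same_block par y y" "same_block par y (block_flip par y)"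
      using same_block_refl same_block_block_flip by blast+
    then have "y < x" "block_flip par y < block_flip par x"
      using blocks_separated[OF xy \<open>has_smaller_ancestor par x\<close> True assms(2)] x_block by blast+
    then show ?thesis by simp
  next
    case False
    then have "y < x" "y < block_flip par x"
      using low_below_block_less[OF \<open>has_smaller_ancestor par x\<close> xy False] x_block by blast+
    then show ?thesis
      using False block_flip_eq_self by simp
  qed
next
  case False
  show ?thesis
  proof (cases "has_smaller_ancestor par y")
    case True
    then have "x < block_flip par y \<longleftrightarrow> x < y"
      using low_separates_block[OF False xy] same_block_block_flip by blast
    then show ?thesis
      using False block_flip_eq_self by simp
  next
    case False
    then show ?thesis
      using \<open>\<not> has_smaller_ancestor par x\<close> block_flip_eq_self by simp
  qed
qed

lemma block_flip_less_iff_low: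
  "\<not> has_smaller_ancestor par x \<Longrightarrow> anc x y \<Longrightarrow> block_flip par x < block_flip par y \<longleftrightarrow> x < y"
  using block_flip_less_iff same_block_has_smaller_ancestor by blast

lemma has_smaller_ancestor_iff_block_flip:
  "has_smaller_ancestor par v \<longleftrightarrow> (\<exists>b. anc b v \<and> block_flip par b < block_flip par v)"
proof
  assume "has_smaller_ancestor par v"
  then obtain u where u: "block_base par u v"
    using block_base_exists by blast
  then have "anc u v" "\<not> has_smaller_ancestor par u" "u < v"
    using block_base_less unfolding block_base_def by auto
  then show "\<exists>b. anc b v \<and> block_flip par b < block_flip par v"
    using block_flip_less_iff_low by blast
next
  assume "\<exists>b. anc b v \<and> block_flip par b < block_flip par v"
  then obtain b where b: "anc b v" "block_flip par b < block_flip par v"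
    by blast
  show "has_smaller_ancestor par v"
  proof (cases "same_block par b v")
    case True
    then show ?thesis using same_block_has_smaller_ancestor by blast
  next
    case False
    then have "b < v" using block_flip_less_iff b by blast
    then show ?thesis unfolding has_smaller_ancestor_def using b by blast
  qed
qed

lemma has_smaller_ancestor_flip_forest:
  "has_smaller_ancestor (flip_forest par) z \<longleftrightarrow> has_smaller_ancestor par (block_flip par z)"
proof -
  have "has_smaller_ancestor (flip_forest par) z \<longleftrightarrow>
      (\<exists>a. anc (block_flip par a) (block_flip par z) \<and> a < z)"
    unfolding has_smaller_ancestor_def strict_ancestor_flip_forest by blast
  also have "\<dots> \<longleftrightarrow> (\<exists>b. anc b (block_flip par z) \<and>
      block_flip par b < block_flip par (block_flip par z))"
    by (metis block_flip_block_flip)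
  also have "\<dots> \<longleftrightarrow> has_smaller_ancestor par (block_flip par z)"
    using has_smaller_ancestor_iff_block_flip by blast
  finally show ?thesis .
qed

lemma block_path_flip_forest:
  "block_path (flip_forest par) t x \<longleftrightarrow> block_path par (block_flip par t) (block_flip par x)"
  unfolding block_path_def ancestor_or_self_flip_forest has_smaller_ancestor_flip_forest
  by (metis block_flip_block_flip)

lemma same_block_flip_forest:
  "same_block (flip_forest par) x y \<longleftrightarrow> same_block par (block_flip par x) (block_flip par y)"
  unfolding same_block_def block_path_flip_forest by (metis block_flip_block_flip)

lemma block_flip_forest: "block (flip_forest par) z = block par (block_flip par z)"
proof -
  have "same_block par (block_flip par z) (block_flip par w) \<longleftrightarrow> same_block par (block_flip par z) w"
    for w by (metis same_block_block_flip_right block_flip_block_flip)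
  then show ?thesis
    unfolding block_def same_block_flip_forest by simp
qed

lemma block_flip_flip_forest: "block_flip (flip_forest par) = block_flip par"
proof
  fix z
  show "block_flip (flip_forest par) z = block_flip par z"
  proof (cases "has_smaller_ancestor par (block_flip par z)")
    case True
    let ?y = "block_flip par z"
    have "?y \<in> block par ?y"
      unfolding block_def using same_block_refl True by simp
    moreover have "z = mirror (block par ?y) ?y"
      using True block_flip_block_flip[of z] unfolding block_flip_def by simp
    ultimately have "mirror (block par ?y) z = ?y"
      using mirror_mirror[OF finite_block] by metis
    then show ?thesis
      unfolding block_flip_def[of "flip_forest par"] has_smaller_ancestor_flip_forest
        block_flip_forest using True by simp
  next
    case False
    then have "block_flip par z = z"
      by (metis has_smaller_ancestor_block_flip block_flip_eq_self)
    then show ?thesis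
      unfolding block_flip_def[of "flip_forest par"] has_smaller_ancestor_flip_forest
      using False by simp
  qed
qed

lemma flip_forest_flip_forest: "flip_forest (flip_forest par) = par"
  unfolding flip_forest_def[of "flip_forest par"] block_flip_flip_forest
  unfolding flip_forest_def by (simp add: relabel_relabel block_flip_block_flip)

end

section \<open>Forests avoiding 123, 2413 and 3142\<close>

locale forest_avoiding_123_2413_3142 = forest +
  assumes avoids_123: "\<not> contains_pattern par [1,2,3]"
    and avoids_2413: "\<not> contains_pattern par [2,4,1,3]"
    and avoids_3142: "\<not> contains_pattern par [3,1,4,2]"
begin

lemma descendant_less:
  assumes "has_smaller_ancestor par x" "anc x y"
  shows "y < x"
proof -
  obtain c where "anc c x" "c < x"
    using assms(1) unfolding has_smaller_ancestor_def by blast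
  then have "\<not> x < y"
    using assms(2) avoids_123 unfolding contains_123_iff by blast
  moreover have "x \<noteq> y"
    using assms(2) anc_irrefl by blast
  ultimately show ?thesis by simp
qed

lemma low_above_block:
  assumes low: "\<not> has_smaller_ancestor par x" and "anc x y" "same_block par y k" "y < x"
  shows "k < x"
proof (rule ccontr)
  assume "\<not> k < x"
  moreover have "k \<noteq> x"
    using low assms(3) same_block_has_smaller_ancestor by blast
  ultimately have "x < k" by simp
  obtain u where u: "block_base par u y"
    using block_base_exists assms(3) same_block_has_smaller_ancestor by blast
  then have "u < y"
    by (rule block_base_less)
  then have "anc x u"
    using low_ancestor_above_block_base[OF u low assms(2)] assms(4)
    unfolding ancestor_or_self_def by auto
  obtain t where t: "anc u t" "anc_eq t y" "anc_eq t k" "same_block par t k"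
    using same_block_common_top[OF assms(3) u] by blast
  have "k \<le> t"
    using t(3,4) descendant_less same_block_has_smaller_ancestor
    unfolding ancestor_or_self_def by fastforce
  then have "x < t" "anc t y"
    using t(2) \<open>x < k\<close> assms(4) unfolding ancestor_or_self_def by auto
  (* x, u, t, y form a 3142 *)
  then show False
    using avoids_3142 \<open>anc x u\<close> t(1) \<open>u < y\<close> assms(4) unfolding contains_3142_iff by blast
qed

lemma blocks_separated:
  assumes "anc x y" "has_smaller_ancestor par x" "has_smaller_ancestor par y"
    and "\<not> same_block par x y" "same_block par y k" "same_block par x k'"
  shows "k < k'"
proof -
  obtain u where u: "block_base par u x"
    using block_base_exists assms(2) by blast
  have "u < k'"
    using block_base_less_same_block u assms(6) by blast
  moreover have "k < u"
  proof (rule ccontr)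
    assume "\<not> k < u"
    moreover have "k \<noteq> u"
      using u assms(5) same_block_has_smaller_ancestor unfolding block_base_def by blast
    ultimately have "u < k" by simp
    obtain p where p: "\<not> has_smaller_ancestor par p" "anc x p" "anc p k"
      using low_between_blocks_above assms(1-5) by blast
    have "anc u x"
      using u unfolding block_base_def by blast
    then have "p < u"
      using not_has_smaller_ancestor_less p(1,2) strict_ancestor_trans by blast
    moreover have "k < x"
      using descendant_less assms(2) strict_ancestor_trans p(2,3) by blast
    (* u, x, p, k form a 2413 *)
    ultimately show False
      using avoids_2413 \<open>anc u x\<close> p(2,3) \<open>u < k\<close> unfolding contains_2413_iff by blast
  qed
  ultimately show ?thesis by simp
qed

sublocale separated_forest
  by unfold_locales (fact blocks_separated low_above_block)+

lemma block_flip_less_iff_same_block: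
  assumes "has_smaller_ancestor par x" "anc x y"
  shows "block_flip par x < block_flip par y \<longleftrightarrow> same_block par x y"
proof (cases "same_block par x y")
  case True
  then show ?thesis
    using same_block_block_flip_less_iff descendant_less assms by blast
next
  case False
  then show ?thesis
    using block_flip_less_iff descendant_less assms by (metis order.asym)
qed

lemma flip_forest_avoids_132: "\<not> contains_pattern (flip_forest par) [1,3,2]"
proof
  assume "contains_pattern (flip_forest par) [1,3,2]"
  then obtain x1 x2 x3 where a12: "anc x1 x2" and a23: "anc x2 x3"
    and o13: "block_flip par x1 < block_flip par x3" and o32: "block_flip par x3 < block_flip par x2"
    unfolding contains_132_iff strict_ancestor_flip_forest by (metis block_flip_block_flip)
  have a13: "anc x1 x3"
    using strict_ancestor_trans a12 a23 by blast
  show False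
  proof (cases "has_smaller_ancestor par x1")
    case True
    have "same_block par x1 x2" "same_block par x1 x3"
      using block_flip_less_iff_same_block[OF True] a12 a13 o13 less_trans[OF o13 o32] by auto
    then have "same_block par x2 x3"
      using same_block_sym same_block_trans by blast
    then show False
      using block_flip_less_iff_same_block a23 o32 same_block_has_smaller_ancestor by fastforce
  next
    case False
    have "x1 < x2" "x1 < x3"
      using block_flip_less_iff_low[OF False] a12 a13 o13 less_trans[OF o13 o32] by auto
    then have h2: "has_smaller_ancestor par x2" and h3: "has_smaller_ancestor par x3"
      unfolding has_smaller_ancestor_def using a12 a13 by blast+
    have "\<not> same_block par x2 x3"
      using block_flip_less_iff_same_block[OF h2 a23] o32 by simp
    then obtain p where p: "\<not> has_smaller_ancestor par p" "anc x2 p" "anc p x3"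
      by (rule low_between_blocks[OF a23 h2 h3])
    have "x3 < x2"
      using descendant_less h2 a23 by blast
    moreover have "p < x1"
      using not_has_smaller_ancestor_less p(1) strict_ancestor_trans[OF a12 p(2)] by blast
    ultimately show False
      using avoids_2413 a12 p(2,3) \<open>x1 < x3\<close> unfolding contains_2413_iff by blast
  qed
qed

lemma flip_forest_avoids_2314: "\<not> contains_pattern (flip_forest par) [2,3,1,4]"
proof
  assume "contains_pattern (flip_forest par) [2,3,1,4]"
  then obtain x1 x2 x3 x4 where a12: "anc x1 x2" and a23: "anc x2 x3" and a34: "anc x3 x4"
    and o31: "block_flip par x3 < block_flip par x1" and o12: "block_flip par x1 < block_flip par x2"
    and o24: "block_flip par x2 < block_flip par x4"
    unfolding contains_2314_iff strict_ancestor_flip_forest by (metis block_flip_block_flip)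
  have a13: "anc x1 x3" and a14: "anc x1 x4" and a24: "anc x2 x4"
    using strict_ancestor_trans a12 a23 a34 by blast+
  show False
  proof (cases "has_smaller_ancestor par x1")
    case True
    have "same_block par x1 x4"
      using block_flip_less_iff_same_block[OF True a14] less_trans[OF o12 o24] by simp
    then have "same_block par x1 x3"
      using same_block_between a13 a34 by blast
    then show False
      using block_flip_less_iff_same_block[OF True a13] o31 by simp
  next
    case False
    have "x1 < x2"
      using block_flip_less_iff_low[OF False a12] o12 by simp
    then have h2: "has_smaller_ancestor par x2"
      unfolding has_smaller_ancestor_def using a12 by blast
    have "same_block par x2 x4"
      using block_flip_less_iff_same_block[OF h2 a24] o24 by simp
    then have "same_block par x2 x3"
      using same_block_between a23 a34 by blast
    then show False
      using block_flip_less_iff_same_block[OF h2 a23] less_trans[OF o31 o12] by simp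
  qed
qed

lemma flip_forest_avoids_3124: "\<not> contains_pattern (flip_forest par) [3,1,2,4]"
proof
  assume "contains_pattern (flip_forest par) [3,1,2,4]"
  then obtain x1 x2 x3 x4 where a12: "anc x1 x2" and a23: "anc x2 x3" and a34: "anc x3 x4"
    and o23: "block_flip par x2 < block_flip par x3" and o31: "block_flip par x3 < block_flip par x1"
    and o14: "block_flip par x1 < block_flip par x4"
    unfolding contains_3124_iff strict_ancestor_flip_forest by (metis block_flip_block_flip)
  have a13: "anc x1 x3" and a14: "anc x1 x4" and a24: "anc x2 x4"
    using strict_ancestor_trans a12 a23 a34 by blast+
  show False
  proof (cases "has_smaller_ancestor par x1")
    case True
    have "same_block par x1 x4"
      using block_flip_less_iff_same_block[OF True a14] o14 by simp
    then have "same_block par x1 x2"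
      using same_block_between a12 a24 by blast
    then show False
      using block_flip_less_iff_same_block[OF True a12] less_trans[OF o23 o31] by simp
  next
    case False
    have "x3 < x1" "x1 < x4"
      using block_flip_less_iff_low[OF False] a13 a14 o31 o14 anc_irrefl
      by (metis linorder_neqE_nat order.asym)+
    have h3: "has_smaller_ancestor par x3"
    proof (cases "has_smaller_ancestor par x2")
      case True
      then show ?thesis
        using block_flip_less_iff_same_block[OF True a23] o23 same_block_has_smaller_ancestor
        by blast
    next
      case False
      then have "x2 < x3"
        using block_flip_less_iff_low[OF False a23] o23 by simp
      then show ?thesis
        unfolding has_smaller_ancestor_def using a23 by blast
    qed
    then have "x4 < x3"
      using descendant_less a34 by blast
    then show False
      using \<open>x3 < x1\<close> \<open>x1 < x4\<close> by simp
  qed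
qed

lemma avoids_flip_forest: "avoids (flip_forest par) {[1,3,2], [2,3,1,4], [3,1,2,4]}"
  unfolding avoids_def
  using flip_forest_avoids_132 flip_forest_avoids_2314 flip_forest_avoids_3124 by blast

end

section \<open>Forests avoiding 132, 2314 and 3124\<close>

locale forest_avoiding_132_2314_3124 = forest +
  assumes avoids_132: "\<not> contains_pattern par [1,3,2]"
    and avoids_2314: "\<not> contains_pattern par [2,3,1,4]"
    and avoids_3124: "\<not> contains_pattern par [3,1,2,4]"
begin

lemma same_block_descendant_greater:
  assumes "anc x y" "same_block par x y"
  shows "x < y"
  using assms
proof (induction y rule: less_induct)
  case (less y)
  obtain c where c: "anc c y" "c < y"
    using less.prems same_block_has_smaller_ancestor unfolding has_smaller_ancestor_def by blast
  from strict_ancestor_total[OF c(1) less.prems(1)] consider "c = x" | "anc c x" | "anc x c"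
    by blast
  then show ?case
  proof cases
    case 1
    then show ?thesis using c by simp
  next
    case 2
    then have "\<not> y < x"
      using avoids_132 less.prems(1) c unfolding contains_132_iff by blast
    moreover have "x \<noteq> y"
      using less.prems anc_irrefl by blast
    ultimately show ?thesis by simp
  next
    case 3
    then have "x < c"
      using less.IH c same_block_between less.prems by blast
    then show ?thesis using c by simp
  qed
qed

lemma low_above_block:
  assumes low: "\<not> has_smaller_ancestor par x" and "anc x y" "same_block par y k" "y < x"
  shows "k < x"
proof (rule ccontr)
  assume "\<not> k < x"
  moreover have "k \<noteq> x"
    using low assms(3) same_block_has_smaller_ancestor by blast
  ultimately have "x < k" by simp
  obtain u where u: "block_base par u y"
    using block_base_exists assms(3) same_block_has_smaller_ancestor by blast
  then have "u < y"
    by (rule block_base_less)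
  then have "anc x u"
    using low_ancestor_above_block_base[OF u low assms(2)] assms(4)
    unfolding ancestor_or_self_def by auto
  obtain t where t: "anc u t" "anc_eq t y" "anc_eq t k" "same_block par t y"
    using same_block_common_top[OF assms(3) u] by blast
  have "t \<le> y"
    using t(2,4) same_block_descendant_greater unfolding ancestor_or_self_def by fastforce
  then have "anc t k"
    using t(3) \<open>x < k\<close> assms(4) unfolding ancestor_or_self_def by auto
  moreover have "u < t"
    using block_base_less_same_block u t(4) same_block_sym by blast
  (* x, u, t, k form a 3124 *)
  ultimately show False
    using avoids_3124 \<open>anc x u\<close> t(1) \<open>t \<le> y\<close> assms(4) \<open>x < k\<close>
    unfolding contains_3124_iff by (meson le_less_trans)
qed

lemma blocks_separated:
  assumes "anc x y" "has_smaller_ancestor par x" "has_smaller_ancestor par y"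
    and "\<not> same_block par x y" "same_block par y k" "same_block par x k'"
  shows "k < k'"
proof -
  obtain u where u: "block_base par u x"
    using block_base_exists assms(2) by blast
  have "u < k'"
    using block_base_less_same_block u assms(6) by blast
  moreover have "k < u"
  proof (rule ccontr)
    assume "\<not> k < u"
    moreover have "k \<noteq> u"
      using u assms(5) same_block_has_smaller_ancestor unfolding block_base_def by blast
    ultimately have "u < k" by simp
    obtain p where p: "\<not> has_smaller_ancestor par p" "anc x p" "anc p k"
      using low_between_blocks_above assms(1-5) by blast
    have "anc u x"
      using u unfolding block_base_def by blast
    then have "p < u"
      using not_has_smaller_ancestor_less p(1,2) strict_ancestor_trans by blast
    have "u < x"
      using block_base_less u by blast
    have "k \<noteq> x"
      using assms(4,5) same_block_sym by blast
    then consider "x < k" | "k < x" by arith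
    then show False
    proof cases
      case 1
      (* u, x, p, k form a 2314 *)
      then show False
        using avoids_2314 \<open>anc u x\<close> p(2,3) \<open>p < u\<close> \<open>u < x\<close>
        unfolding contains_2314_iff by blast
    next
      case 2
      then show False
        using avoids_132 \<open>anc u x\<close> strict_ancestor_trans[OF p(2,3)] \<open>u < k\<close>
        unfolding contains_132_iff by blast
    qed
  qed
  ultimately show ?thesis by simp
qed

sublocale separated_forest
  by unfold_locales (fact blocks_separated low_above_block)+

lemma block_flip_descendant_less:
  assumes "has_smaller_ancestor par x" "anc x y"
  shows "block_flip par y < block_flip par x"
proof (cases "same_block par x y")
  case True
  then have "x < y"
    using same_block_descendant_greater assms(2) by blast
  then show ?thesis
    using same_block_block_flip_less_iff[OF True] block_flip_eq_iff[of x y]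
    by (auto simp: neq_iff)
next
  case False
  have "y < x"
  proof (cases "has_smaller_ancestor par y")
    case True
    then show ?thesis
      using blocks_separated[OF assms(2,1) True False] same_block_refl assms(1) by blast
  next
    case False
    then show ?thesis
      using not_has_smaller_ancestor_less assms(2) by blast
  qed
  then show ?thesis
    using block_flip_less_iff[OF assms(2) False] block_flip_eq_iff[of x y]
    by (auto simp: neq_iff)
qed

lemma flip_forest_avoids_123: "\<not> contains_pattern (flip_forest par) [1,2,3]"
proof
  assume "contains_pattern (flip_forest par) [1,2,3]"
  then obtain x1 x2 x3 where a12: "anc x1 x2" and a23: "anc x2 x3"
    and o12: "block_flip par x1 < block_flip par x2" and o23: "block_flip par x2 < block_flip par x3"
    unfolding contains_123_iff strict_ancestor_flip_forest by (metis block_flip_block_flip)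
  show False
  proof (cases "has_smaller_ancestor par x1")
    case True
    then show False
      using block_flip_descendant_less a12 o12 by fastforce
  next
    case False
    have "x1 < x2"
      using block_flip_less_iff_low[OF False a12] o12 by simp
    then have "has_smaller_ancestor par x2"
      unfolding has_smaller_ancestor_def using a12 by blast
    then show False
      using block_flip_descendant_less a23 o23 by fastforce
  qed
qed

lemma flip_forest_avoids_2413: "\<not> contains_pattern (flip_forest par) [2,4,1,3]"
proof
  assume "contains_pattern (flip_forest par) [2,4,1,3]"
  then obtain x1 x2 x3 x4 where a12: "anc x1 x2" and a23: "anc x2 x3" and a34: "anc x3 x4"
    and o31: "block_flip par x3 < block_flip par x1" and o14: "block_flip par x1 < block_flip par x4"
    and o42: "block_flip par x4 < block_flip par x2"
    unfolding contains_2413_iff strict_ancestor_flip_forest by (metis block_flip_block_flip)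
  have a14: "anc x1 x4" and a24: "anc x2 x4"
    using strict_ancestor_trans a12 a23 a34 by blast+
  show False
  proof (cases "has_smaller_ancestor par x1")
    case True
    then show False
      using block_flip_descendant_less[OF True a12] less_trans[OF o14 o42] by simp
  next
    case False
    have "x1 < x2" "x1 < x4"
      using block_flip_less_iff_low[OF False] a12 a14 o14 less_trans[OF o14 o42] by auto
    then have h2: "has_smaller_ancestor par x2" and h4: "has_smaller_ancestor par x4"
      unfolding has_smaller_ancestor_def using a12 a14 by blast+
    have "\<not> has_smaller_ancestor par x3"
      using block_flip_descendant_less a34 less_trans[OF o31 o14] by fastforce
    then have "\<not> same_block par x2 x4"
      using same_block_between a23 a34 same_block_has_smaller_ancestor by blast
    then have "x4 < x2"
      using blocks_separated[OF a24 h2 h4] same_block_refl h2 h4 by blast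
    then show False
      using avoids_132 a12 a24 \<open>x1 < x4\<close> unfolding contains_132_iff by blast
  qed
qed

lemma flip_forest_avoids_3142: "\<not> contains_pattern (flip_forest par) [3,1,4,2]"
proof
  assume "contains_pattern (flip_forest par) [3,1,4,2]"
  then obtain x1 x2 x3 x4 where a12: "anc x1 x2" and a23: "anc x2 x3" and a34: "anc x3 x4"
    and o24: "block_flip par x2 < block_flip par x4" and o41: "block_flip par x4 < block_flip par x1"
    and o13: "block_flip par x1 < block_flip par x3"
    unfolding contains_3142_iff strict_ancestor_flip_forest by (metis block_flip_block_flip)
  have a13: "anc x1 x3" and a14: "anc x1 x4" and a24: "anc x2 x4"
    using strict_ancestor_trans a12 a23 a34 by blast+
  show False
  proof (cases "has_smaller_ancestor par x1")
    case True
    then show False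
      using block_flip_descendant_less a13 o13 by fastforce
  next
    case False
    have "x1 < x3" "x4 < x1"
      using block_flip_less_iff_low[OF False] a13 a14 o13 o41 anc_irrefl
      by (metis linorder_neqE_nat order.asym)+
    have "\<not> has_smaller_ancestor par x2"
      using block_flip_descendant_less a24 o24 by fastforce
    then have "x2 < x4"
      using block_flip_less_iff_low a24 o24 by blast
    then show False
      using avoids_132 a23 a34 \<open>x4 < x1\<close> \<open>x1 < x3\<close> unfolding contains_132_iff by fastforce
  qed
qed

lemma avoids_flip_forest: "avoids (flip_forest par) {[1,2,3], [2,4,1,3], [3,1,4,2]}"
  unfolding avoids_def
  using flip_forest_avoids_123 flip_forest_avoids_2413 flip_forest_avoids_3142 by blast

end

theorem corollary3p19:
  shows "forest_wilf_equiv {[1,2,3], [2,4,1,3], [3,1,4,2]} {[1,3,2], [2,3,1,4], [3,1,2,4]}"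
  unfolding forest_wilf_equiv_def num_avoiding_def
proof
  fix n
  let ?A = "{par. rooted_forest n par \<and> avoids par {[1,2,3], [2,4,1,3], [3,1,4,2]}}"
  let ?B = "{par. rooted_forest n par \<and> avoids par {[1,3,2], [2,3,1,4], [3,1,2,4]}}"
  have A_to_B: "flip_forest par \<in> ?B \<and> flip_forest (flip_forest par) = par" if "par \<in> ?A" for par
  proof -
    interpret forest_avoiding_123_2413_3142 n par
      using that by unfold_locales (auto simp: avoids_def)
    show ?thesis
      using rooted_forest_flip_forest avoids_flip_forest flip_forest_flip_forest by simp
  qed
  have B_to_A: "flip_forest par \<in> ?A \<and> flip_forest (flip_forest par) = par" if "par \<in> ?B" for par
  proof -
    interpret forest_avoiding_132_2314_3124 n par
      using that by unfold_locales (auto simp: avoids_def)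
    show ?thesis
      using rooted_forest_flip_forest avoids_flip_forest flip_forest_flip_forest by simp
  qed
  have "bij_betw flip_forest ?A ?B"
    by (rule bij_betw_byWitness[where f' = flip_forest]) (use A_to_B B_to_A in auto)
  then show "card ?A = card ?B"
    by (rule bij_betw_same_card)
qed

end
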